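(* Let $\mathcal H$ be a family of graphs. The following are equivalent: (i) there is a constant $c=c(\mathcal H)$ such that every (not necessarily connected) $\mathcal H$-free graph $G$ has fewer than $c$ vertices $v$ with $\alpha(G[N(v)])\ge 2$; (ii) there is a positive integer $n$ such that $\mathcal H\le \{K_n^*,\ nP_3,\ K_{1,n}^*,\ K_{2,n},\ E_2+K_n,\ CK_n\}$.
   Context: All graphs are finite, simple, undirected. For graphs $H_1,H_2$, write $H_1\prec H_2$ if $H_2$ contains an induced subgraph isomorphic to $H_1$. A graph $G$ is $\mathcal H$-free if no $H\in\mathcal H$ satisfies $H\prec G$. For families $\mathcal H_1,\mathcal H_2$, write $\mathcal H_1\le\mathcal H_2$ if for every $H_2\in\mathcal H_2$ there is $H_1\in\mathcal H_1$ with $H_1\prec H_2$. $N(v)$ is the neighborhood, $G[S]$ the induced subgraph, $\alpha$ the independence number. $K_n$, $E_n$, $P_n$ are the complete graph, edgeless graph, and path on $n$ vertices; $K_{s,t}$ is the complete bipartite graph; $nG$ is the disjoint union of $n$ copies of $G$; $G_1+G_2$ is the join. $K_{1,n}^*$ is obtained from the star $K_{1,n}$ by attaching a new pendant vertex to each leaf; $K_n^*$ is obtained from $K_n$ by attaching a new pendant vertex to each vertex; $CK_n$ is obtained from two disjoint copies of $K_n$ by adding a perfect matching between them. *)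

theory Defs
  imports Main
begin

text \<open>Finite simple graphs with natural-number vertices: a pair (V, E) where
  E is a set of 2-element subsets of V. Every finite graph is isomorphic to one of these.\<close>

type_synonym graph = "nat set \<times> nat set set"

definition verts :: "graph \<Rightarrow> nat set" where "verts G = fst G"
definition edges :: "graph \<Rightarrow> nat set set" where "edges G = snd G"

definition wf_graph :: "graph \<Rightarrow> bool" where
  "wf_graph G \<longleftrightarrow> finite (verts G) \<and>
     edges G \<subseteq> {{u, v} | u v. u \<in> verts G \<and> v \<in> verts G \<and> u \<noteq> v}"

definition induced_sub :: "graph \<Rightarrow> graph \<Rightarrow> bool" (infix "\<prec>" 50) where
  "H \<prec> G \<longleftrightarrow> (\<exists>f. inj_on f (verts H) \<and> f ` verts H \<subseteq> verts G \<and>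
      (\<forall>u\<in>verts H. \<forall>v\<in>verts H. {u, v} \<in> edges H \<longleftrightarrow> {f u, f v} \<in> edges G))"

definition H_free :: "graph set \<Rightarrow> graph \<Rightarrow> bool" where
  "H_free \<H> G \<longleftrightarrow> (\<forall>H\<in>\<H>. \<not> H \<prec> G)"

definition family_le :: "graph set \<Rightarrow> graph set \<Rightarrow> bool" where
  "family_le \<H>1 \<H>2 \<longleftrightarrow> (\<forall>H2\<in>\<H>2. \<exists>H1\<in>\<H>1. H1 \<prec> H2)"

definition nbhd :: "graph \<Rightarrow> nat \<Rightarrow> nat set" where
  "nbhd G v = {u \<in> verts G. {u, v} \<in> edges G}"

definition induced :: "graph \<Rightarrow> nat set \<Rightarrow> graph" where
  "induced G S = (S \<inter> verts G, {e \<in> edges G. e \<subseteq> S})"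

definition indep_set :: "graph \<Rightarrow> nat set \<Rightarrow> bool" where
  "indep_set G S \<longleftrightarrow> S \<subseteq> verts G \<and> (\<forall>u\<in>S. \<forall>v\<in>S. {u, v} \<notin> edges G)"

definition alpha :: "graph \<Rightarrow> nat" where
  "alpha G = Max {card S | S. indep_set G S}"

text \<open>K_n^*: core clique 0..n-1, pendant vertex i+n attached to i.\<close>
definition Kstar :: "nat \<Rightarrow> graph" where
  "Kstar n = ({..<2*n},
     {{i, j} | i j. i < n \<and> j < n \<and> i \<noteq> j} \<union> {{i, i + n} | i. i < n})"

definition nP3 :: "nat \<Rightarrow> graph" where
  "nP3 n = ({..<3*n},
     {{3*i, 3*i+1} | i. i < n} \<union> {{3*i+1, 3*i+2} | i. i < n})"

text \<open>K_{1,n}^*: centre 0, leaves 1..n, pendant i+n attached to leaf i.\<close>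
definition K1nstar :: "nat \<Rightarrow> graph" where
  "K1nstar n = ({..2*n},
     {{0, i} | i. 1 \<le> i \<and> i \<le> n} \<union> {{i, i + n} | i. 1 \<le> i \<and> i \<le> n})"

definition K2n :: "nat \<Rightarrow> graph" where
  "K2n n = ({..n+1}, {{a, b} | a b. a \<le> 1 \<and> 2 \<le> b \<and> b \<le> n + 1})"

definition E2K :: "nat \<Rightarrow> graph" where
  "E2K n = ({..n+1}, {{a, b} | a b. a \<le> n + 1 \<and> b \<le> n + 1 \<and> a \<noteq> b \<and> {a, b} \<noteq> {0, 1}})"

text \<open>CK_n: cliques on 0..n-1 and n..2n-1 plus the matching {i, i+n}.\<close>
definition CK :: "nat \<Rightarrow> graph" where
  "CK n = ({..<2*n},
     {{i, j} | i j. i < n \<and> j < n \<and> i \<noteq> j} \<union>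
     {{i + n, j + n} | i j. i < n \<and> j < n \<and> i \<noteq> j} \<union> {{i, i + n} | i. i < n})"

end

theory Submission
  imports Defs "HOL-Library.Ramsey"
begin

text \<open>
  A vertex v satisfies \<open>\<alpha>(G[N(v)]) \<ge> 2\<close> exactly when it is the centre of a cherry, an induced
  path a - v - b. Each of the six graphs with parameter n has at least n such vertices, which gives
  (i) \<Longrightarrow> (ii) with n = c + 2.

  Conversely, let G contain none of the six graphs for some n. Two non-adjacent vertices have fewer
  than R common neighbours, since n of them spanning a clique or an independent set would give
  \<open>E\<^sub>2 + K\<^sub>n\<close> or \<open>K\<^sub>2\<^sub>,\<^sub>n\<close>. If G had many cherry centres, Ramsey's theorem would give
  a large clique or independent set of them, and Ramsey's theorem for pairs, applied to a colouring
  recording how the cherries of two centres meet, gives K centres \<open>x\<^sub>0, \<dots>, x\<^sub>K\<^sub>-\<^sub>1\<close> with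
  cherries whose adjacencies depend only on the order of the indices. A short case analysis of these
  patterns either exhibits two non-adjacent vertices with K \<ge> R common neighbours or embeds one of
  \<open>K\<^sub>n\<^sup>*\<close>, \<open>nP\<^sub>3\<close>, \<open>K\<^sub>1\<^sub>,\<^sub>n\<^sup>*\<close>, \<open>CK\<^sub>n\<close>.
\<close>

section \<open>Induced subgraphs and cherries\<close>

definition adj :: "graph \<Rightarrow> nat \<Rightarrow> nat \<Rightarrow> bool" where
  "adj G u v \<longleftrightarrow> {u, v} \<in> edges G"

lemma adj_commute: "adj G u v \<longleftrightarrow> adj G v u"
  by (simp add: adj_def insert_commute)

lemma adj_imp_verts:
  assumes "wf_graph G" "adj G u v"
  shows "u \<in> verts G" "v \<in> verts G"
  using assms by (auto simp: wf_graph_def adj_def doubleton_eq_iff)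

lemma adj_irrefl: "wf_graph G \<Longrightarrow> \<not> adj G u u"
  by (auto simp: wf_graph_def adj_def doubleton_eq_iff)

lemma singleton_notin_edges: "wf_graph G \<Longrightarrow> {u} \<notin> edges G"
  using adj_irrefl[of G u] by (simp add: adj_def)

lemma mem_nbhd_iff:
  assumes "wf_graph G"
  shows "u \<in> nbhd G v \<longleftrightarrow> adj G v u"
  using adj_imp_verts(2)[OF assms, of v u] by (auto simp: nbhd_def adj_def insert_commute)

lemma verts_induced: "verts (induced G S) = S \<inter> verts G"
  by (simp add: induced_def verts_def)

lemma edges_induced: "edges (induced G S) = {e \<in> edges G. e \<subseteq> S}"
  by (simp add: induced_def edges_def)

lemma induced_sub_trans:
  assumes "induced_sub A B" "induced_sub B C"
  shows "induced_sub A C"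
proof -
  obtain f where f: "inj_on f (verts A)" "f ` verts A \<subseteq> verts B"
    "\<forall>u\<in>verts A. \<forall>v\<in>verts A. {u, v} \<in> edges A \<longleftrightarrow> {f u, f v} \<in> edges B"
    using assms(1) unfolding induced_sub_def by blast
  obtain g where g: "inj_on g (verts B)" "g ` verts B \<subseteq> verts C"
    "\<forall>u\<in>verts B. \<forall>v\<in>verts B. {u, v} \<in> edges B \<longleftrightarrow> {g u, g v} \<in> edges C"
    using assms(2) unfolding induced_sub_def by blast
  have "inj_on (g \<circ> f) (verts A)"
    using f(1,2) g(1) by (blast intro: comp_inj_on inj_on_subset)
  moreover have "(g \<circ> f) ` verts A \<subseteq> verts C"
    using f(2) g(2) by auto
  moreover have "\<forall>u\<in>verts A. \<forall>v\<in>verts A. {u, v} \<in> edges A \<longleftrightarrow> {(g \<circ> f) u, (g \<circ> f) v} \<in> edges C"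
    using f(2,3) g(3) by (simp add: image_subset_iff)
  ultimately show ?thesis
    unfolding induced_sub_def by blast
qed

lemma H_free_family_le: "family_le \<H> \<H>' \<Longrightarrow> H_free \<H> G \<Longrightarrow> H_free \<H>' G"
  unfolding family_le_def H_free_def using induced_sub_trans by blast

text \<open>Injectivity of f need only be checked on vertices with the same neighbourhood in H: any
  other pair is separated by an adjacency that f preserves.\<close>

lemma induced_subI:
  assumes verts: "\<And>u. u \<in> verts H \<Longrightarrow> f u \<in> verts G"
    and edges: "\<And>u v. u \<in> verts H \<Longrightarrow> v \<in> verts H \<Longrightarrow> {u, v} \<in> edges H \<longleftrightarrow> adj G (f u) (f v)"
    and twins: "\<And>u v. u \<in> verts H \<Longrightarrow> v \<in> verts H \<Longrightarrow> f u = f v \<Longrightarrow>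
      (\<And>w. w \<in> verts H \<Longrightarrow> {w, u} \<in> edges H \<longleftrightarrow> {w, v} \<in> edges H) \<Longrightarrow> u = v"
  shows "induced_sub H G"
proof -
  have "inj_on f (verts H)"
  proof (rule inj_onI)
    fix u v assume uv: "u \<in> verts H" "v \<in> verts H" "f u = f v"
    then show "u = v" by (rule twins) (use edges uv in simp)
  qed
  then show ?thesis using verts edges unfolding induced_sub_def adj_def by blast
qed

definition cherry :: "graph \<Rightarrow> nat \<Rightarrow> nat \<Rightarrow> nat \<Rightarrow> bool" where
  "cherry G v a b \<longleftrightarrow> adj G v a \<and> adj G v b \<and> a \<noteq> b \<and> \<not> adj G a b"

definition nonsimplicial :: "graph \<Rightarrow> nat set" where
  "nonsimplicial G = {v \<in> verts G. 2 \<le> alpha (induced G (nbhd G v))}"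

lemma alpha_nbhd_ge_2_iff:
  assumes wf: "wf_graph G"
  shows "2 \<le> alpha (induced G (nbhd G v)) \<longleftrightarrow> (\<exists>a b. cherry G v a b)"
proof -
  let ?indep = "indep_set (induced G (nbhd G v))"
  have nbhd_subset: "nbhd G v \<subseteq> verts G"
    by (auto simp: nbhd_def)
  have indep_iff: "?indep S \<longleftrightarrow> S \<subseteq> nbhd G v \<and> (\<forall>a\<in>S. \<forall>b\<in>S. \<not> adj G a b)" for S
    unfolding indep_set_def verts_induced edges_induced adj_def using nbhd_subset by blast
  have "{card S | S. ?indep S} \<subseteq> {..card (verts G)}"
  proof
    fix k assume "k \<in> {card S | S. ?indep S}"
    then obtain S where "k = card S" "S \<subseteq> verts G"
      using indep_iff nbhd_subset by blast
    then show "k \<in> {..card (verts G)}"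
      using wf by (simp add: wf_graph_def card_mono)
  qed
  then have fin: "finite {card S | S. ?indep S}"
    by (rule finite_subset) simp
  have "{card S | S. ?indep S} \<noteq> {}"
    using indep_iff[of "{}"] by auto
  then have "2 \<le> alpha (induced G (nbhd G v)) \<longleftrightarrow> (\<exists>k\<in>{card S | S. ?indep S}. 2 \<le> k)"
    unfolding alpha_def by (rule Max_ge_iff[OF fin])
  also have "\<dots> \<longleftrightarrow> (\<exists>S. ?indep S \<and> 2 \<le> card S)"
    by auto
  also have "\<dots> \<longleftrightarrow> (\<exists>a b. cherry G v a b)"
  proof
    assume "\<exists>S. ?indep S \<and> 2 \<le> card S"
    then obtain S where S: "?indep S" "2 \<le> card S" by blast
    then have "finite S" by (metis card.infinite not_numeral_le_zero)
    then obtain a b where "a \<in> S" "b \<in> S" "a \<noteq> b"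
      using S(2) card_le_Suc0_iff_eq[of S] by auto
    then show "\<exists>a b. cherry G v a b"
      using S(1) mem_nbhd_iff[OF wf] unfolding indep_iff cherry_def by blast
  next
    assume "\<exists>a b. cherry G v a b"
    then obtain a b where ab: "cherry G v a b" by blast
    have "{a, b} \<subseteq> nbhd G v"
      using ab mem_nbhd_iff[OF wf] unfolding cherry_def by blast
    moreover have "\<forall>x\<in>{a, b}. \<forall>y\<in>{a, b}. \<not> adj G x y"
      using ab adj_irrefl[OF wf] adj_commute[of G a b] unfolding cherry_def by blast
    ultimately have "?indep {a, b}"
      using indep_iff by blast
    moreover have "card {a, b} = 2"
      using ab unfolding cherry_def by simp
    ultimately show "\<exists>S. ?indep S \<and> 2 \<le> card S"
      by (intro exI[of _ "{a, b}"]) simp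
  qed
  finally show ?thesis .
qed

lemma cherry_choice:
  assumes "\<And>v. v \<in> Q \<Longrightarrow> \<exists>a b. cherry G v a b"
  obtains A B where "\<And>v. v \<in> Q \<Longrightarrow> cherry G v (A v) (B v)"
proof -
  have "\<forall>v\<in>Q. \<exists>a b. cherry G v a b"
    using assms by blast
  from bchoice[OF this] obtain A where "\<forall>v\<in>Q. \<exists>b. cherry G v (A v) b"
    by blast
  from bchoice[OF this] obtain B where "\<forall>v\<in>Q. cherry G v (A v) (B v)"
    by blast
  then show thesis
    using that by blast
qed

lemma mem_nonsimplicial_iff:
  assumes "wf_graph G"
  shows "v \<in> nonsimplicial G \<longleftrightarrow> (\<exists>a b. cherry G v a b)"
  using alpha_nbhd_ge_2_iff[OF assms, of v] adj_imp_verts(1)[OF assms, of v]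
  unfolding nonsimplicial_def cherry_def by auto

lemma card_le_card_nonsimplicial:
  assumes "wf_graph G" "\<And>v. v \<in> S \<Longrightarrow> \<exists>a b. cherry G v a b"
  shows "card S \<le> card (nonsimplicial G)"
proof (rule card_mono)
  show "finite (nonsimplicial G)"
    using assms(1) unfolding wf_graph_def nonsimplicial_def by auto
  show "S \<subseteq> nonsimplicial G"
    using assms(2) by (auto simp: mem_nonsimplicial_iff[OF assms(1)])
qed

section \<open>The six obstructions\<close>

lemma verts_Kstar [simp]: "verts (Kstar n) = {..<2 * n}"
  by (simp add: Kstar_def verts_def)

lemma verts_nP3 [simp]: "verts (nP3 n) = {..<3 * n}"
  by (simp add: nP3_def verts_def)

lemma verts_K1nstar [simp]: "verts (K1nstar n) = {..2 * n}"
  by (simp add: K1nstar_def verts_def)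

lemma verts_K2n [simp]: "verts (K2n n) = {..n + 1}"
  by (simp add: K2n_def verts_def)

lemma verts_E2K [simp]: "verts (E2K n) = {..n + 1}"
  by (simp add: E2K_def verts_def)

lemma verts_CK [simp]: "verts (CK n) = {..<2 * n}"
  by (simp add: CK_def verts_def)

lemma Kstar_edge_iff:
  "{u, v} \<in> edges (Kstar n) \<longleftrightarrow>
     u < n \<and> v < n \<and> u \<noteq> v \<or> u < n \<and> v = u + n \<or> v < n \<and> u = v + n"
  by (auto simp: Kstar_def edges_def doubleton_eq_iff)

lemma eq_3_mult_add_cancel:
  fixes i j r s :: nat
  assumes "3 * i + r = 3 * j + s" "r < 3" "s < 3"
  shows "i = j \<and> r = s"
proof -
  have "(3 * i + r) div 3 = i" "(3 * i + r) mod 3 = r" "(3 * j + s) div 3 = j" "(3 * j + s) mod 3 = s"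
    using assms(2,3) by simp_all
  then show ?thesis
    using assms(1) by metis
qed

lemma nP3_edge_iff:
  assumes "r < 3" "s < 3"
  shows "{3 * i + r, 3 * j + s} \<in> edges (nP3 n) \<longleftrightarrow> i < n \<and> i = j \<and> (r = 1 \<longleftrightarrow> s \<noteq> 1)"
proof
  assume "{3 * i + r, 3 * j + s} \<in> edges (nP3 n)"
  then obtain l where "l < n" "3 * i + r = 3 * l \<and> 3 * j + s = 3 * l + 1 \<or> 3 * i + r = 3 * l + 1 \<and> 3 * j + s = 3 * l \<or>
      3 * i + r = 3 * l + 1 \<and> 3 * j + s = 3 * l + 2 \<or> 3 * i + r = 3 * l + 2 \<and> 3 * j + s = 3 * l + 1"
    unfolding nP3_def edges_def by (auto simp: doubleton_eq_iff)
  then show "i < n \<and> i = j \<and> (r = 1 \<longleftrightarrow> s \<noteq> 1)"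
    using assms eq_3_mult_add_cancel[of i r l 0] eq_3_mult_add_cancel[of i r l 1] eq_3_mult_add_cancel[of i r l 2]
      eq_3_mult_add_cancel[of j s l 0] eq_3_mult_add_cancel[of j s l 1] eq_3_mult_add_cancel[of j s l 2]
    by auto
next
  assume "i < n \<and> i = j \<and> (r = 1 \<longleftrightarrow> s \<noteq> 1)"
  moreover have "r = 0 \<or> r = 1 \<or> r = 2" "s = 0 \<or> s = 1 \<or> s = 2"
    using assms by auto
  ultimately show "{3 * i + r, 3 * j + s} \<in> edges (nP3 n)"
    unfolding nP3_def edges_def by (auto simp: insert_commute)
qed

lemma K1nstar_edge_iff:
  "{u, v} \<in> edges (K1nstar n) \<longleftrightarrow>
     u = 0 \<and> 1 \<le> v \<and> v \<le> n \<or> v = 0 \<and> 1 \<le> u \<and> u \<le> n \<or>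
     1 \<le> u \<and> u \<le> n \<and> v = u + n \<or> 1 \<le> v \<and> v \<le> n \<and> u = v + n"
  by (auto simp: K1nstar_def edges_def doubleton_eq_iff)

lemma K2n_edge_iff:
  "{u, v} \<in> edges (K2n n) \<longleftrightarrow> u \<le> 1 \<and> 2 \<le> v \<and> v \<le> n + 1 \<or> v \<le> 1 \<and> 2 \<le> u \<and> u \<le> n + 1"
  by (auto simp: K2n_def edges_def doubleton_eq_iff)

lemma E2K_edge_iff:
  "{u, v} \<in> edges (E2K n) \<longleftrightarrow> u \<le> n + 1 \<and> v \<le> n + 1 \<and> u \<noteq> v \<and> \<not> (u \<le> 1 \<and> v \<le> 1)"
  by (auto simp: E2K_def edges_def doubleton_eq_iff)

lemma CK_edge_iff:
  "{u, v} \<in> edges (CK n) \<longleftrightarrow>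
     u < n \<and> v < n \<and> u \<noteq> v \<or> n \<le> u \<and> u < 2 * n \<and> n \<le> v \<and> v < 2 * n \<and> u \<noteq> v \<or>
     u < n \<and> v = u + n \<or> v < n \<and> u = v + n"
  apply (auto simp: CK_def edges_def doubleton_eq_iff)
  apply (metis add.commute le_add_diff_inverse less_diff_conv2 mult_2)+
  done

lemma wf_Kstar: "wf_graph (Kstar n)"
  unfolding wf_graph_def Kstar_def verts_def edges_def by fastforce

lemma wf_nP3: "wf_graph (nP3 n)"
  unfolding wf_graph_def nP3_def verts_def edges_def by fastforce

lemma wf_K1nstar: "wf_graph (K1nstar n)"
  unfolding wf_graph_def K1nstar_def verts_def edges_def by fastforce

lemma wf_K2n: "wf_graph (K2n n)"
  unfolding wf_graph_def K2n_def verts_def edges_def by fastforce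

lemma wf_E2K: "wf_graph (E2K n)"
  unfolding wf_graph_def E2K_def verts_def edges_def by fastforce

lemma wf_CK: "wf_graph (CK n)"
  unfolding wf_graph_def CK_def verts_def edges_def by fastforce

lemma n_le_card_nonsimplicialI:
  assumes "wf_graph F" "inj_on h {..<n}" "\<And>i. i < n \<Longrightarrow> cherry F (h i) (a i) (b i)"
  shows "n \<le> card (nonsimplicial F)"
proof -
  have "card (h ` {..<n}) \<le> card (nonsimplicial F)"
    using assms(1,3) by (intro card_le_card_nonsimplicial) auto
  then show ?thesis
    using assms(2) by (simp add: card_image)
qed

definition obstructions :: "nat \<Rightarrow> graph set" where
  "obstructions n = {Kstar n, nP3 n, K1nstar n, K2n n, E2K n, CK n}"

lemma n_le_card_nonsimplicial_obstruction:
  assumes "F \<in> obstructions n" "2 \<le> n"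
  shows "n \<le> card (nonsimplicial F)"
proof -
  let ?other = "\<lambda>i. if i = 0 then 1 else 0 :: nat"
  have "n \<le> card (nonsimplicial (Kstar n))"
    using assms(2)
    by (intro n_le_card_nonsimplicialI[OF wf_Kstar, where h = id and a = ?other and b = "\<lambda>i. i + n"])
      (auto simp: cherry_def adj_def Kstar_edge_iff)
  moreover have "n \<le> card (nonsimplicial (nP3 n))"
  proof (rule n_le_card_nonsimplicialI[OF wf_nP3])
    show "inj_on (\<lambda>i. 3 * i + 1) {..<n}"
      by (simp add: inj_on_def)
    show "cherry (nP3 n) (3 * i + 1) (3 * i) (3 * i + 2)" if "i < n" for i
      using that nP3_edge_iff[of 1 0 i i n] nP3_edge_iff[of 1 2 i i n] nP3_edge_iff[of 0 2 i i n]
      unfolding cherry_def adj_def by simp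
  qed
  moreover have "n \<le> card (nonsimplicial (K1nstar n))"
    by (intro n_le_card_nonsimplicialI[OF wf_K1nstar, where h = Suc and a = "\<lambda>_. 0"
          and b = "\<lambda>i. Suc i + n"])
      (auto simp: cherry_def adj_def K1nstar_edge_iff)
  moreover have "n \<le> card (nonsimplicial (K2n n))"
    by (intro n_le_card_nonsimplicialI[OF wf_K2n, where h = "\<lambda>i. i + 2" and a = "\<lambda>_. 0"
          and b = "\<lambda>_. 1"])
      (auto simp: inj_on_def cherry_def adj_def K2n_edge_iff)
  moreover have "n \<le> card (nonsimplicial (E2K n))"
    by (intro n_le_card_nonsimplicialI[OF wf_E2K, where h = "\<lambda>i. i + 2" and a = "\<lambda>_. 0"
          and b = "\<lambda>_. 1"])
      (auto simp: inj_on_def cherry_def adj_def E2K_edge_iff)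
  moreover have "n \<le> card (nonsimplicial (CK n))"
    using assms(2)
    by (intro n_le_card_nonsimplicialI[OF wf_CK, where h = id and a = ?other and b = "\<lambda>i. i + n"])
      (auto simp: cherry_def adj_def CK_edge_iff)
  ultimately show ?thesis
    using assms(1) unfolding obstructions_def by blast
qed

lemma induced_sub_KstarI:
  assumes wf: "wf_graph G"
    and cc: "\<And>i j. i < n \<Longrightarrow> j < n \<Longrightarrow> i \<noteq> j \<Longrightarrow> adj G (c i) (c j)"
    and cp: "\<And>i j. i < n \<Longrightarrow> j < n \<Longrightarrow> adj G (c i) (p j) \<longleftrightarrow> i = j"
    and pp: "\<And>i j. i < n \<Longrightarrow> j < n \<Longrightarrow> \<not> adj G (p i) (p j)"
  shows "induced_sub (Kstar n) G"
proof (rule induced_subI[where f = "\<lambda>u. if u < n then c u else p (u - n)"])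
  fix u assume "u \<in> verts (Kstar n)"
  then show "(if u < n then c u else p (u - n)) \<in> verts G"
    using adj_imp_verts[OF wf cp[of u u, THEN iffD2]]
      adj_imp_verts[OF wf cp[of "u - n" "u - n", THEN iffD2]] by auto
next
  fix u v assume "u \<in> verts (Kstar n)" "v \<in> verts (Kstar n)"
  then show "{u, v} \<in> edges (Kstar n) \<longleftrightarrow>
      adj G (if u < n then c u else p (u - n)) (if v < n then c v else p (v - n))"
    using cc[of u v] cp[of u "v - n"] cp[of v "u - n"] pp[of "u - n" "v - n"]
      adj_irrefl[OF wf, of "c u"] adj_commute[of G "p (u - n)" "c v"]
    by (auto simp: Kstar_edge_iff)
next
  fix u v assume uv: "u \<in> verts (Kstar n)" "v \<in> verts (Kstar n)"
    and twin: "\<And>w. w \<in> verts (Kstar n) \<Longrightarrow> {w, u} \<in> edges (Kstar n) \<longleftrightarrow> {w, v} \<in> edges (Kstar n)"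
  show "u = v"
  proof (rule ccontr)
    assume "u \<noteq> v"
    consider "u < n" "v < n" | "u < n" "n \<le> v" | "n \<le> u" "v < n" | "n \<le> u" "n \<le> v"
      by linarith
    then show False
    proof cases
      case 1
      then show False
        using twin[of u] \<open>u \<noteq> v\<close> by (simp add: Kstar_edge_iff singleton_notin_edges[OF wf_Kstar])
    next
      case 2
      then show False
        using twin[of "u + n"] uv by (simp add: Kstar_edge_iff)
    next
      case 3
      then show False
        using twin[of "v + n"] uv by (simp add: Kstar_edge_iff)
    next
      case 4
      then show False
        using twin[of "u - n"] uv \<open>u \<noteq> v\<close> by (simp add: Kstar_edge_iff; linarith)
    qed
  qed
qed

lemma induced_sub_CKI:
  assumes wf: "wf_graph G"
    and cc: "\<And>i j. i < n \<Longrightarrow> j < n \<Longrightarrow> i \<noteq> j \<Longrightarrow> adj G (c i) (c j)"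
    and dd: "\<And>i j. i < n \<Longrightarrow> j < n \<Longrightarrow> i \<noteq> j \<Longrightarrow> adj G (d i) (d j)"
    and cd: "\<And>i j. i < n \<Longrightarrow> j < n \<Longrightarrow> adj G (c i) (d j) \<longleftrightarrow> i = j"
    and c_ne_d: "\<And>i j. i < n \<Longrightarrow> j < n \<Longrightarrow> c i \<noteq> d j"
  shows "induced_sub (CK n) G"
proof (rule induced_subI[where f = "\<lambda>u. if u < n then c u else d (u - n)"])
  fix u assume "u \<in> verts (CK n)"
  then show "(if u < n then c u else d (u - n)) \<in> verts G"
    using adj_imp_verts[OF wf cd[of u u, THEN iffD2]]
      adj_imp_verts[OF wf cd[of "u - n" "u - n", THEN iffD2]] by auto
next
  fix u v assume "u \<in> verts (CK n)" "v \<in> verts (CK n)"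
  then show "{u, v} \<in> edges (CK n) \<longleftrightarrow>
      adj G (if u < n then c u else d (u - n)) (if v < n then c v else d (v - n))"
    using cc[of u v] dd[of "u - n" "v - n"] cd[of u "v - n"] cd[of v "u - n"]
      adj_irrefl[OF wf, of "c u"] adj_irrefl[OF wf, of "d (u - n)"] adj_commute[of G "d (u - n)" "c v"]
    by (auto simp: CK_edge_iff)
next
  fix u v assume uv: "u \<in> verts (CK n)" "v \<in> verts (CK n)"
    and eq: "(if u < n then c u else d (u - n)) = (if v < n then c v else d (v - n))"
    and twin: "\<And>w. w \<in> verts (CK n) \<Longrightarrow> {w, u} \<in> edges (CK n) \<longleftrightarrow> {w, v} \<in> edges (CK n)"
  show "u = v"
  proof (cases "u < n \<longleftrightarrow> v < n")
    case True
    then show ?thesis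
      using twin[of u] uv by (auto simp: CK_edge_iff singleton_notin_edges[OF wf_CK])
  next
    case False
    have "u - n < n" "v - n < n"
      using uv by auto
    then show ?thesis
      using False eq c_ne_d[of u "v - n"] c_ne_d[of v "u - n"] by (auto split: if_splits)
  qed
qed

lemma induced_sub_K1nstarI:
  assumes wf: "wf_graph G"
    and zl: "\<And>i. i < n \<Longrightarrow> adj G z (l i)"
    and zp: "\<And>i. i < n \<Longrightarrow> \<not> adj G z (p i)" "\<And>i. i < n \<Longrightarrow> z \<noteq> p i"
    and lp: "\<And>i j. i < n \<Longrightarrow> j < n \<Longrightarrow> adj G (l i) (p j) \<longleftrightarrow> i = j"
    and ll: "\<And>i j. i < n \<Longrightarrow> j < n \<Longrightarrow> \<not> adj G (l i) (l j)"
    and pp: "\<And>i j. i < n \<Longrightarrow> j < n \<Longrightarrow> \<not> adj G (p i) (p j)"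
    and "z \<in> verts G"
  shows "induced_sub (K1nstar n) G"
proof (rule induced_subI[where f = "\<lambda>u. if u = 0 then z else if u \<le> n then l (u - 1) else p (u - n - 1)"])
  fix u assume "u \<in> verts (K1nstar n)"
  then show "(if u = 0 then z else if u \<le> n then l (u - 1) else p (u - n - 1)) \<in> verts G"
    using \<open>z \<in> verts G\<close> adj_imp_verts(2)[OF wf zl[of "u - 1"]]
      adj_imp_verts(2)[OF wf lp[of "u - n - 1" "u - n - 1", THEN iffD2]] by auto
next
  fix u v assume "u \<in> verts (K1nstar n)" "v \<in> verts (K1nstar n)"
  then show "{u, v} \<in> edges (K1nstar n) \<longleftrightarrow>
      adj G (if u = 0 then z else if u \<le> n then l (u - 1) else p (u - n - 1))
        (if v = 0 then z else if v \<le> n then l (v - 1) else p (v - n - 1))"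
    using zl[of "u - 1"] zl[of "v - 1"] zp(1)[of "u - n - 1"] zp(1)[of "v - n - 1"]
      lp[of "u - 1" "v - n - 1"] lp[of "v - 1" "u - n - 1"] ll[of "u - 1" "v - 1"]
      pp[of "u - n - 1" "v - n - 1"] adj_irrefl[OF wf, of z] adj_commute[of G "l (u - 1)" z]
      adj_commute[of G "p (u - n - 1)" z] adj_commute[of G "p (u - n - 1)" "l (v - 1)"]
    by (auto simp: K1nstar_edge_iff)
next
  fix u v assume uv: "u \<in> verts (K1nstar n)" "v \<in> verts (K1nstar n)"
    and eq: "(if u = 0 then z else if u \<le> n then l (u - 1) else p (u - n - 1)) =
      (if v = 0 then z else if v \<le> n then l (v - 1) else p (v - n - 1))"
    and twin: "\<And>w. w \<in> verts (K1nstar n) \<Longrightarrow> {w, u} \<in> edges (K1nstar n) \<longleftrightarrow> {w, v} \<in> edges (K1nstar n)"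
  have "\<not> u \<le> n \<Longrightarrow> u - n - 1 < n \<and> 1 \<le> u - n \<and> u - n \<le> n" "\<not> v \<le> n \<Longrightarrow> v - n - 1 < n"
    using uv by auto
  then show "u = v"
    using uv eq twin[of 0] twin[of "u + n"] twin[of "u - n"] zp(2)[of "u - n - 1"] zp(2)[of "v - n - 1"]
    by (auto simp: K1nstar_edge_iff singleton_notin_edges[OF wf_K1nstar] split: if_splits)
qed

lemma induced_sub_K2nI:
  assumes wf: "wf_graph G"
    and "a \<in> verts G" "b \<in> verts G" "a \<noteq> b" "\<not> adj G a b"
    and ax: "\<And>i. i < n \<Longrightarrow> adj G a (x i)" and bx: "\<And>i. i < n \<Longrightarrow> adj G b (x i)"
    and xx: "\<And>i j. i < n \<Longrightarrow> j < n \<Longrightarrow> \<not> adj G (x i) (x j)"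
    and "inj_on x {..<n}"
  shows "induced_sub (K2n n) G"
proof (rule induced_subI[where f = "\<lambda>u. if u = 0 then a else if u = 1 then b else x (u - 2)"])
  fix u assume "u \<in> verts (K2n n)"
  then show "(if u = 0 then a else if u = 1 then b else x (u - 2)) \<in> verts G"
    using assms(2,3) adj_imp_verts(2)[OF wf ax[of "u - 2"]] by auto
next
  fix u v assume "u \<in> verts (K2n n)" "v \<in> verts (K2n n)"
  then show "{u, v} \<in> edges (K2n n) \<longleftrightarrow>
      adj G (if u = 0 then a else if u = 1 then b else x (u - 2))
        (if v = 0 then a else if v = 1 then b else x (v - 2))"
    using assms(5) ax[of "u - 2"] ax[of "v - 2"] bx[of "u - 2"] bx[of "v - 2"] xx[of "u - 2" "v - 2"]
      adj_irrefl[OF wf, of a] adj_irrefl[OF wf, of b] adj_commute[of G a b]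
      adj_commute[of G "x (u - 2)" a] adj_commute[of G "x (u - 2)" b]
    by (auto simp: K2n_edge_iff)
next
  fix u v assume uv: "u \<in> verts (K2n n)" "v \<in> verts (K2n n)"
    and eq: "(if u = 0 then a else if u = 1 then b else x (u - 2)) =
      (if v = 0 then a else if v = 1 then b else x (v - 2))"
    and twin: "\<And>w. w \<in> verts (K2n n) \<Longrightarrow> {w, u} \<in> edges (K2n n) \<longleftrightarrow> {w, v} \<in> edges (K2n n)"
  have "2 \<le> u \<Longrightarrow> u - 2 < n" "2 \<le> v \<Longrightarrow> v - 2 < n"
    using uv by auto
  then have "2 \<le> u \<Longrightarrow> 2 \<le> v \<Longrightarrow> x (u - 2) = x (v - 2) \<Longrightarrow> u = v"
    using inj_onD[OF \<open>inj_on x {..<n}\<close>, of "u - 2" "v - 2"] by auto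
  then show "u = v"
    using uv eq twin[of 0] twin[of 1] \<open>a \<noteq> b\<close>
    by (auto simp: K2n_edge_iff singleton_notin_edges[OF wf_K2n] split: if_splits)
qed

lemma induced_sub_E2KI:
  assumes wf: "wf_graph G"
    and "a \<in> verts G" "b \<in> verts G" "a \<noteq> b" "\<not> adj G a b"
    and ax: "\<And>i. i < n \<Longrightarrow> adj G a (x i)" and bx: "\<And>i. i < n \<Longrightarrow> adj G b (x i)"
    and xx: "\<And>i j. i < n \<Longrightarrow> j < n \<Longrightarrow> i \<noteq> j \<Longrightarrow> adj G (x i) (x j)"
  shows "induced_sub (E2K n) G"
proof (rule induced_subI[where f = "\<lambda>u. if u = 0 then a else if u = 1 then b else x (u - 2)"])
  fix u assume "u \<in> verts (E2K n)"
  then show "(if u = 0 then a else if u = 1 then b else x (u - 2)) \<in> verts G"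
    using assms(2,3) adj_imp_verts(2)[OF wf ax[of "u - 2"]] by auto
next
  fix u v assume "u \<in> verts (E2K n)" "v \<in> verts (E2K n)"
  then show "{u, v} \<in> edges (E2K n) \<longleftrightarrow>
      adj G (if u = 0 then a else if u = 1 then b else x (u - 2))
        (if v = 0 then a else if v = 1 then b else x (v - 2))"
    using assms(5) ax[of "u - 2"] ax[of "v - 2"] bx[of "u - 2"] bx[of "v - 2"] xx[of "u - 2" "v - 2"]
      adj_irrefl[OF wf, of a] adj_irrefl[OF wf, of b] adj_irrefl[OF wf, of "x (u - 2)"]
      adj_commute[of G a b] adj_commute[of G "x (u - 2)" a] adj_commute[of G "x (u - 2)" b]
    by (auto simp: E2K_edge_iff)
next
  fix u v assume uv: "u \<in> verts (E2K n)" "v \<in> verts (E2K n)"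
    and eq: "(if u = 0 then a else if u = 1 then b else x (u - 2)) =
      (if v = 0 then a else if v = 1 then b else x (v - 2))"
    and twin: "\<And>w. w \<in> verts (E2K n) \<Longrightarrow> {w, u} \<in> edges (E2K n) \<longleftrightarrow> {w, v} \<in> edges (E2K n)"
  show "u = v"
    using uv eq twin[of 0] twin[of 1] twin[of u] \<open>a \<noteq> b\<close>
    by (auto simp: E2K_edge_iff singleton_notin_edges[OF wf_E2K] split: if_splits)
qed

lemma induced_sub_nP3I:
  assumes wf: "wf_graph G"
    and xa: "\<And>i j. i < n \<Longrightarrow> j < n \<Longrightarrow> adj G (x i) (a j) \<longleftrightarrow> i = j"
    and xb: "\<And>i j. i < n \<Longrightarrow> j < n \<Longrightarrow> adj G (x i) (b j) \<longleftrightarrow> i = j"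
    and xx: "\<And>i j. i < n \<Longrightarrow> j < n \<Longrightarrow> \<not> adj G (x i) (x j)"
    and aa: "\<And>i j. i < n \<Longrightarrow> j < n \<Longrightarrow> \<not> adj G (a i) (a j)"
    and bb: "\<And>i j. i < n \<Longrightarrow> j < n \<Longrightarrow> \<not> adj G (b i) (b j)"
    and ab: "\<And>i j. i < n \<Longrightarrow> j < n \<Longrightarrow> \<not> adj G (a i) (b j)"
    and a_ne_b: "\<And>i. i < n \<Longrightarrow> a i \<noteq> b i"
  shows "induced_sub (nP3 n) G"
proof -
  define g where "g r i = (if r = 0 then a i else if r = (1::nat) then x i else b i)" for r i
  have pattern: "adj G (g r i) (g s j) \<longleftrightarrow> i = j \<and> (r = 1 \<longleftrightarrow> s \<noteq> 1)"
    if "i < n" "j < n" for i j r s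
    using xa[OF that] xa[OF that(2,1)] xb[OF that] xb[OF that(2,1)] xx[OF that] aa[OF that]
      bb[OF that] ab[OF that] ab[OF that(2,1)] adj_commute[of G "a i" "x j"]
      adj_commute[of G "b i" "x j"] adj_commute[of G "b i" "a j"]
    unfolding g_def by (cases "r = 0"; cases "r = 1"; cases "s = 0"; cases "s = 1") auto
  have blocks: "u = 3 * (u div 3) + u mod 3" "u mod 3 < 3" "u div 3 < n" if "u \<in> verts (nP3 n)" for u
    using that mult_div_mod_eq[of 3 u] by auto
  show ?thesis
  proof (rule induced_subI[where f = "\<lambda>u. g (u mod 3) (u div 3)"])
    fix u assume "u \<in> verts (nP3 n)"
    then have "u div 3 < n"
      by (rule blocks)
    then show "g (u mod 3) (u div 3) \<in> verts G"
      using adj_imp_verts[OF wf xa[of "u div 3" "u div 3", THEN iffD2]]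
        adj_imp_verts[OF wf xb[of "u div 3" "u div 3", THEN iffD2]]
      unfolding g_def by auto
  next
    fix u v assume uv: "u \<in> verts (nP3 n)" "v \<in> verts (nP3 n)"
    define i r j s where "i = u div 3" "r = u mod 3" "j = v div 3" "s = v mod 3"
    have "u = 3 * i + r" "v = 3 * j + s" "r < 3" "s < 3" "i < n" "j < n"
      using blocks[OF uv(1)] blocks[OF uv(2)] unfolding i_r_j_s_def by simp_all
    then show "{u, v} \<in> edges (nP3 n) \<longleftrightarrow> adj G (g (u mod 3) (u div 3)) (g (v mod 3) (v div 3))"
      using pattern[of i j r s] nP3_edge_iff[of r s i j n] unfolding i_r_j_s_def by simp
  next
    fix u v assume uv: "u \<in> verts (nP3 n)" "v \<in> verts (nP3 n)"
      and eq: "g (u mod 3) (u div 3) = g (v mod 3) (v div 3)"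
      and twin: "\<And>w. w \<in> verts (nP3 n) \<Longrightarrow> {w, u} \<in> edges (nP3 n) \<longleftrightarrow> {w, v} \<in> edges (nP3 n)"
    define i r j s where "i = u div 3" "r = u mod 3" "j = v div 3" "s = v mod 3"
    have u: "u = 3 * i + r" "r < 3" "i < n" and v: "v = 3 * j + s" "s < 3" "j < n"
      using blocks[OF uv(1)] blocks[OF uv(2)] unfolding i_r_j_s_def by simp_all
    have "{3 * i + 1, 3 * i + r} \<in> edges (nP3 n) \<longleftrightarrow> {3 * i + 1, 3 * j + s} \<in> edges (nP3 n)"
      "{3 * i + 0, 3 * i + r} \<in> edges (nP3 n) \<longleftrightarrow> {3 * i + 0, 3 * j + s} \<in> edges (nP3 n)"
      using twin[of "3 * i + 1"] twin[of "3 * i"] u v by simp_all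
    then have "i = j" "r = 1 \<longleftrightarrow> s = 1"
      using nP3_edge_iff[of 1 r i i n] nP3_edge_iff[of 1 s i j n] nP3_edge_iff[of 0 r i i n]
        nP3_edge_iff[of 0 s i j n] u(2,3) v(2) by auto
    then have "r = s \<or> r = 0 \<and> s = 2 \<or> r = 2 \<and> s = 0"
      using u(2) v(2) by auto
    then show "u = v"
      using eq a_ne_b[OF \<open>i < n\<close>] \<open>i = j\<close> u v unfolding g_def i_r_j_s_def by auto
  qed
qed

section \<open>Ramsey's theorem for increasing sequences\<close>

lemma finite_enumeration:
  fixes A :: "'a::linorder set"
  assumes "finite A"
  obtains e where "\<And>i. i < card A \<Longrightarrow> e i \<in> A" "strict_mono_on {..<card A} e"
proof
  let ?xs = "sorted_list_of_set A"
  show "?xs ! i \<in> A" if "i < card A" for i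
    using that assms by (metis length_sorted_list_of_set nth_mem set_sorted_list_of_set)
  show "strict_mono_on {..<card A} (\<lambda>i. ?xs ! i)"
    using sorted_wrt_nth_less[OF strict_sorted_list_of_set, of _ _ A]
    by (auto simp: strict_mono_on_def)
qed

lemma ordered_ramsey:
  fixes K :: nat
  obtains N where "\<And>(Q :: nat set) (col :: nat \<Rightarrow> nat \<Rightarrow> 'c::finite). finite Q \<Longrightarrow> N \<le> card Q \<Longrightarrow>
    \<exists>x c. (\<forall>i<K. x i \<in> Q) \<and> strict_mono_on {..<K} x \<and> (\<forall>i j. i < j \<longrightarrow> j < K \<longrightarrow> col (x i) (x j) = c)"
proof -
  obtain h :: "'c \<Rightarrow> nat" where h: "bij_betw h UNIV {0..<card (UNIV :: 'c set)}"
    using ex_bij_betw_finite_nat[of "UNIV :: 'c set"] by auto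
  let ?sizes = "replicate (card (UNIV :: 'c set)) K"
  obtain N :: nat where N: "partn_lst {..<N} ?sizes 2"
    using ramsey_full[of ?sizes 2] by blast
  show ?thesis
  proof (rule that)
    fix Q :: "nat set" and col :: "nat \<Rightarrow> nat \<Rightarrow> 'c"
    assume Q: "finite Q" "N \<le> card Q"
    obtain e where e: "\<And>i. i < card Q \<Longrightarrow> e i \<in> Q" "strict_mono_on {..<card Q} e"
      using finite_enumeration[OF Q(1)] by blast
    define f where "f X = h (col (e (Min X)) (e (Max X)))" for X
    have "f \<in> nsets {..<N} 2 \<rightarrow> {..<length ?sizes}"
      using h by (auto simp: f_def bij_betw_def)
    then obtain k H where "k < length ?sizes" "H \<in> nsets {..<N} (?sizes ! k)" "f ` nsets H 2 \<subseteq> {k}"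
      using partn_lstE[OF N] by blast
    then have H: "H \<subseteq> {..<N}" "finite H" "card H = K" and hom: "f ` nsets H 2 \<subseteq> {k}"
      by (auto simp: nsets_def)
    obtain g where g: "\<And>i. i < K \<Longrightarrow> g i \<in> H" "strict_mono_on {..<K} g"
      using finite_enumeration[OF H(2)] H(3) by blast
    have g_less: "g i < card Q" if "i < K" for i
      using g(1)[OF that] H(1) Q(2) by auto
    have "col (e (g i)) (e (g j)) = inv h k" if "i < j" "j < K" for i j
    proof -
      have "g i < g j"
        using g(2) that by (simp add: strict_mono_on_def)
      then have "{g i, g j} \<in> nsets H 2" "Min {g i, g j} = g i" "Max {g i, g j} = g j"
        using g(1) that by auto
      then have "h (col (e (g i)) (e (g j))) = k"
        using hom unfolding f_def by (metis image_subset_iff singletonD)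
      then show ?thesis
        using h by (metis bij_betw_imp_inj_on inv_f_f)
    qed
    moreover have "strict_mono_on {..<K} (e \<circ> g)"
      using e(2) g(2) g_less by (simp add: strict_mono_on_def)
    ultimately show "\<exists>x c. (\<forall>i<K. x i \<in> Q) \<and> strict_mono_on {..<K} x \<and>
        (\<forall>i j. i < j \<longrightarrow> j < K \<longrightarrow> col (x i) (x j) = c)"
      using e(1) g_less by (intro exI[of _ "e \<circ> g"] exI[of _ "inv h k"]) auto
  qed
qed

lemma homogeneous_adj_sym:
  fixes i j K :: nat
  assumes "\<And>i j. i < j \<Longrightarrow> j < K \<Longrightarrow> adj G (y i) (y j) = p" "i < K" "j < K" "i \<noteq> j"
  shows "adj G (y i) (y j) = p"
  using assms(1)[of i j] assms(1)[of j i] assms(2-4) adj_commute[of G "y i" "y j"]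
  by (cases i j rule: linorder_cases) auto

lemma homogeneous_matching:
  fixes K :: nat
  assumes xy: "\<And>i. i < K \<Longrightarrow> adj G (x i) (y i)"
    and forward: "\<And>i j. i < j \<Longrightarrow> j < K \<Longrightarrow> \<not> adj G (y i) (x j)"
    and backward: "\<And>i j. i < j \<Longrightarrow> j < K \<Longrightarrow> \<not> adj G (y j) (x i)"
    and "i < K" "j < K"
  shows "adj G (x i) (y j) \<longleftrightarrow> i = j"
  using xy[of i] forward[of j i] backward[of i j] assms(4,5) adj_commute[of G "x i" "y j"]
  by (cases i j rule: linorder_cases) auto

lemma homogeneous_matching_nondominating:
  fixes K :: nat
  assumes xy: "\<And>i. i < K \<Longrightarrow> adj G (x i) (y i)"
    and p: "\<And>i j. i < j \<Longrightarrow> j < K \<Longrightarrow> adj G (y i) (x j) = p"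
    and q: "\<And>i j. i < j \<Longrightarrow> j < K \<Longrightarrow> adj G (y j) (x i) = q"
    and nondominating: "\<And>k. k < K \<Longrightarrow> \<not> (\<forall>l<K. adj G (y k) (x l))"
    and "i < K" "j < K"
  shows "adj G (x i) (y j) \<longleftrightarrow> i = j"
proof -
  have "\<not> p"
  proof
    assume p
    have "adj G (y 0) (x l)" if "l < K" for l
      using xy[of 0] p[of 0 l] \<open>p\<close> that adj_commute[of G "x 0" "y 0"] by (cases "l = 0") auto
    then show False
      using nondominating[of 0] \<open>i < K\<close> by auto
  qed
  moreover have "\<not> q"
  proof
    assume q
    have "adj G (y (K - 1)) (x l)" if "l < K" for l
      using xy[of "K - 1"] q[of l "K - 1"] \<open>q\<close> that adj_commute[of G "x (K - 1)" "y (K - 1)"]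
      by (cases "l = K - 1") auto
    then show False
      using nondominating[of "K - 1"] \<open>i < K\<close> by auto
  qed
  ultimately show ?thesis
    using homogeneous_matching[where x = x and y = y, OF xy _ _ assms(5,6)] p q by blast
qed

lemma homogeneous_eq_const:
  fixes K :: nat
  assumes "\<And>i j. i < j \<Longrightarrow> j < K \<Longrightarrow> (a i = a j) = e" "e" "i < K"
  shows "a i = a 0"
  using assms(1)[of 0 i] assms(2,3) by (cases "i = 0") auto

lemma homogeneous_neq_inj:
  fixes K :: nat
  assumes "\<And>i j. i < j \<Longrightarrow> j < K \<Longrightarrow> (a i = a j) = e" "\<not> e"
  shows "inj_on a {..<K}"
proof (rule inj_onI)
  fix i j assume "i \<in> {..<K}" "j \<in> {..<K}" "a i = a j"
  then show "i = j"
    using assms(1)[of i j] assms(1)[of j i] assms(2) by (cases i j rule: linorder_cases) auto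
qed

section \<open>Graphs without obstructions\<close>

locale unobstructed =
  fixes G :: graph and n R :: nat
  assumes wf: "wf_graph G"
    and obstruction_free: "H_free (obstructions n) G"
    and codegree_less: "\<And>u w. u \<noteq> w \<Longrightarrow> \<not> adj G u w \<Longrightarrow> card (nbhd G u \<inter> nbhd G w) < R"
begin

lemma obstructions_not_induced:
  shows not_Kstar: "\<not> induced_sub (Kstar n) G" and not_nP3: "\<not> induced_sub (nP3 n) G"
    and not_K1nstar: "\<not> induced_sub (K1nstar n) G" and not_CK: "\<not> induced_sub (CK n) G"
  using obstruction_free unfolding H_free_def obstructions_def by auto

lemma card_common_nbrs_less:
  assumes "u \<noteq> w" "\<not> adj G u w" "\<And>c. c \<in> C \<Longrightarrow> adj G u c \<and> adj G w c"
  shows "card C < R"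
proof -
  have "C \<subseteq> nbhd G u \<inter> nbhd G w"
    using assms(3) mem_nbhd_iff[OF wf] by auto
  moreover have "finite (nbhd G u \<inter> nbhd G w)"
    using wf by (auto simp: wf_graph_def nbhd_def)
  ultimately show ?thesis
    using card_mono codegree_less[OF assms(1,2)] le_less_trans by blast
qed

lemma card_common_nbr_family_less:
  assumes "u \<noteq> w" "\<not> adj G u w" "inj_on x I" "\<And>i. i \<in> I \<Longrightarrow> adj G u (x i) \<and> adj G w (x i)"
  shows "card I < R"
  using card_common_nbrs_less[of u w "x ` I"] assms card_image by fastforce

lemma nbr_missing_clique_vertex:
  assumes Q: "\<And>u w. u \<in> Q \<Longrightarrow> w \<in> Q \<Longrightarrow> u \<noteq> w \<Longrightarrow> adj G u w" "finite Q" "R + 2 \<le> card Q"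
    and "cherry G v a b"
  shows "\<exists>y. adj G v y \<and> (\<exists>z\<in>Q. z \<noteq> y \<and> \<not> adj G z y)"
proof (rule ccontr)
  assume "\<not> ?thesis"
  then have "adj G a z \<and> adj G b z" if "z \<in> Q - {a, b}" for z
    using that \<open>cherry G v a b\<close> adj_commute unfolding cherry_def by blast
  then have "card (Q - {a, b}) < R"
    using \<open>cherry G v a b\<close> unfolding cherry_def by (intro card_common_nbrs_less) auto
  moreover have "card Q - 2 \<le> card (Q - {a, b})"
  proof -
    have "card {a, b} \<le> 2"
      by (cases "a = b") auto
    then show ?thesis
      using diff_card_le_card_Diff[of "{a, b}" Q] by simp
  qed
  ultimately show False
    using Q(3) by linarith
qed

text \<open>A vertex \<open>y\<^sub>i\<close> adjacent to all \<open>x\<^sub>j\<close> would share K common neighbours with a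
  vertex of Q it misses. Hence the edges between the \<open>x\<^sub>i\<close> and the \<open>y\<^sub>j\<close> form a perfect matching,
  and the \<open>y\<^sub>i\<close> complete the clique of the \<open>x\<^sub>i\<close> to \<open>CK\<^sub>n\<close> or \<open>K\<^sub>n\<^sup>*\<close>.\<close>

lemma clique_sequence_impossible:
  assumes K: "R \<le> K" "n \<le> K" "3 \<le> K"
    and Q: "\<And>u w. u \<in> Q \<Longrightarrow> w \<in> Q \<Longrightarrow> u \<noteq> w \<Longrightarrow> adj G u w"
    and x: "\<And>i. i < K \<Longrightarrow> x i \<in> Q" "inj_on x {..<K}"
    and xy: "\<And>i. i < K \<Longrightarrow> adj G (x i) (y i)"
    and y_not_dominating: "\<And>i. i < K \<Longrightarrow> \<exists>z\<in>Q. z \<noteq> y i \<and> \<not> adj G z (y i)"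
    and p: "\<And>i j. i < j \<Longrightarrow> j < K \<Longrightarrow> adj G (y i) (x j) = p"
    and q: "\<And>i j. i < j \<Longrightarrow> j < K \<Longrightarrow> adj G (y j) (x i) = q"
    and r: "\<And>i j. i < j \<Longrightarrow> j < K \<Longrightarrow> adj G (y i) (y j) = r"
  shows False
proof -
  have xx: "adj G (x i) (x j)" if "i < K" "j < K" "i \<noteq> j" for i j
    using Q x that by (metis inj_on_def lessThan_iff)
  have nondominating: "\<not> (\<forall>i<K. adj G (y k) (x i))" if "k < K" for k
  proof
    assume dom: "\<forall>i<K. adj G (y k) (x i)"
    obtain z where z: "z \<in> Q" "z \<noteq> y k" "\<not> adj G z (y k)"
      using y_not_dominating[OF \<open>k < K\<close>] by blast
    have "adj G (y k) (x i) \<and> adj G z (x i)" if "i \<in> {..<K}" for i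
    proof -
      have "adj G (y k) (x i)"
        using that dom by simp
      then have "z \<noteq> x i"
        using z(3) adj_commute by metis
      then show ?thesis
        using Q z(1) x(1) that \<open>adj G (y k) (x i)\<close> by simp
    qed
    moreover have "\<not> adj G (y k) z"
      using z(3) adj_commute by metis
    ultimately have "card {..<K} < R"
      using z(2) x(2) by (intro card_common_nbr_family_less[of "y k" z]) auto
    then show False
      using K(1) by simp
  qed
  have matching: "adj G (x i) (y j) \<longleftrightarrow> i = j" if "i < K" "j < K" for i j
    using homogeneous_matching_nondominating[where x = x and y = y, OF xy p q nondominating that] .
  have "x i \<noteq> y j" if "i < K" "j < K" for i j
  proof -
    define k where "k = (if i \<noteq> 0 \<and> j \<noteq> 0 then 0 else if i \<noteq> 1 \<and> j \<noteq> 1 then 1 else 2 :: nat)"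
    have "k < K" "k \<noteq> i" "k \<noteq> j"
      using K(3) unfolding k_def by auto
    then show ?thesis
      using xx[of k i] matching[of k j] that by auto
  qed
  have yy: "adj G (y i) (y j) = r" if "i < K" "j < K" "i \<noteq> j" for i j
    using homogeneous_adj_sym[where y = y and p = r, OF r that] .
  show False
  proof (cases r)
    case True
    have "induced_sub (CK n) G"
      using K(2) xx matching \<open>\<And>i j. i < K \<Longrightarrow> j < K \<Longrightarrow> x i \<noteq> y j\<close> yy True
      by (intro induced_sub_CKI[OF wf, where c = x and d = y]) auto
    then show False
      using not_CK by contradiction
  next
    case False
    have "\<not> adj G (y i) (y j)" if "i < K" "j < K" for i j
      using yy[OF that] False adj_irrefl[OF wf] by (cases "i = j") auto
    then have "induced_sub (Kstar n) G"
      using K(2) xx matching by (intro induced_sub_KstarI[OF wf, where c = x and p = y]) auto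
    then show False
      using not_Kstar by contradiction
  qed
qed

text \<open>If some \<open>y\<^sub>k\<close> were adjacent to all \<open>x\<^sub>i\<close>, it would share K common neighbours with z.
  Otherwise the \<open>y\<^sub>i\<close> are matched to the \<open>x\<^sub>i\<close>, and they form \<open>K\<^sub>n\<^sup>*\<close> with the \<open>x\<^sub>i\<close> or,
  around z, \<open>K\<^sub>1\<^sub>,\<^sub>n\<^sup>*\<close>.\<close>

lemma hub_star_impossible:
  assumes K: "R \<le> K" "n \<le> K" "0 < K"
    and zx: "\<And>i. i < K \<Longrightarrow> adj G z (x i)"
    and zy: "\<And>i. i < K \<Longrightarrow> \<not> adj G z (y i)" "\<And>i. i < K \<Longrightarrow> z \<noteq> y i"
    and xy: "\<And>i. i < K \<Longrightarrow> adj G (x i) (y i)"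
    and xx: "\<And>i j. i < K \<Longrightarrow> j < K \<Longrightarrow> \<not> adj G (x i) (x j)" and "inj_on x {..<K}"
    and p: "\<And>i j. i < j \<Longrightarrow> j < K \<Longrightarrow> adj G (y i) (x j) = p"
    and q: "\<And>i j. i < j \<Longrightarrow> j < K \<Longrightarrow> adj G (y j) (x i) = q"
    and r: "\<And>i j. i < j \<Longrightarrow> j < K \<Longrightarrow> adj G (y i) (y j) = r"
  shows False
proof -
  have nondominating: "\<not> (\<forall>i<K. adj G (y k) (x i))" if "k < K" for k
  proof
    assume "\<forall>i<K. adj G (y k) (x i)"
    then have "card {..<K} < R"
      using zy[OF \<open>k < K\<close>] zx \<open>inj_on x {..<K}\<close>
      by (intro card_common_nbr_family_less[of z "y k"]) auto
    then show False
      using K(1) by simp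
  qed
  have xy_iff: "adj G (x i) (y j) \<longleftrightarrow> i = j" if "i < K" "j < K" for i j
    using homogeneous_matching_nondominating[where x = x and y = y, OF xy p q nondominating that] .
  have yy: "adj G (y i) (y j) = r" if "i < K" "j < K" "i \<noteq> j" for i j
    using homogeneous_adj_sym[where y = y and p = r, OF r that] .
  show False
  proof (cases r)
    case True
    have "induced_sub (Kstar n) G"
      using K(2) yy True xy_iff adj_commute xx
      by (intro induced_sub_KstarI[OF wf, where c = y and p = x]) auto
    then show False
      using not_Kstar by contradiction
  next
    case False
    have "\<not> adj G (y i) (y j)" if "i < K" "j < K" for i j
      using yy[OF that] False adj_irrefl[OF wf] by (cases "i = j") auto
    moreover have "z \<in> verts G"
      using adj_imp_verts(1)[OF wf zx[of 0]] K(3) by simp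
    ultimately have "induced_sub (K1nstar n) G"
      using K(2) zx zy xy_iff xx by (intro induced_sub_K1nstarI[OF wf, where l = x and p = y]) auto
    then show False
      using not_K1nstar by contradiction
  qed
qed

lemma ordered_cross_edges_impossible:
  assumes K: "R + 2 \<le> K"
    and xx: "\<And>i j. i < K \<Longrightarrow> j < K \<Longrightarrow> \<not> adj G (x i) (x j)" "inj_on x {..<K}"
    and xy: "\<And>i. i < K \<Longrightarrow> adj G (x i) (y i)" "inj_on y {..<K}"
    and q1: "\<And>i j. i < j \<Longrightarrow> j < K \<Longrightarrow> adj G (y i) (x j) = q1"
    and q2: "\<And>i j. i < j \<Longrightarrow> j < K \<Longrightarrow> adj G (y j) (x i) = q2"
    and "q1 \<or> q2"
  shows False
proof -
  have "card {..<K - 1} < R" if q1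
  proof (rule card_common_nbr_family_less[of "x (K - 2)" "x (K - 1)" y])
    show "x (K - 2) \<noteq> x (K - 1)"
      using inj_onD[OF xx(2), of "K - 2" "K - 1"] K by auto
    show "\<not> adj G (x (K - 2)) (x (K - 1))"
      using xx K by simp
    show "inj_on y {..<K - 1}"
      using xy(2) by (rule inj_on_subset) auto
    fix l assume "l \<in> {..<K - 1}"
    then show "adj G (x (K - 2)) (y l) \<and> adj G (x (K - 1)) (y l)"
      using xy(1)[of l] q1[of l "K - 2"] q1[of l "K - 1"] \<open>q1\<close> K
        adj_commute[of G "x (K - 2)" "y l"] adj_commute[of G "x (K - 1)" "y l"]
      by (cases "l = K - 2") auto
  qed
  moreover have "card {1..<K} < R" if q2
  proof (rule card_common_nbr_family_less[of "x 0" "x 1" y])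
    show "x 0 \<noteq> x 1"
      using inj_onD[OF xx(2), of 0 1] K by auto
    show "\<not> adj G (x 0) (x 1)"
      using xx K by simp
    show "inj_on y {1..<K}"
      using xy(2) by (rule inj_on_subset) auto
    fix l assume "l \<in> {1..<K}"
    then show "adj G (x 0) (y l) \<and> adj G (x 1) (y l)"
      using xy(1)[of l] q2[of 0 l] q2[of 1 l] \<open>q2\<close>
        adj_commute[of G "x 0" "y l"] adj_commute[of G "x 1" "y l"]
      by (cases "l = 1") auto
  qed
  ultimately show False
    using \<open>q1 \<or> q2\<close> K by auto
qed

lemma cross_star_impossible:
  assumes "n < K"
    and xx: "\<And>i j. i < K \<Longrightarrow> j < K \<Longrightarrow> \<not> adj G (x i) (x j)"
    and xa: "\<And>i j. i < K \<Longrightarrow> j < K \<Longrightarrow> adj G (x i) (a j) \<longleftrightarrow> i = j"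
    and xb: "\<And>i j. i < K \<Longrightarrow> j < K \<Longrightarrow> adj G (x i) (b j) \<longleftrightarrow> i = j"
    and bb: "\<And>i j. i < K \<Longrightarrow> j < K \<Longrightarrow> \<not> adj G (b i) (b j)"
    and ab: "\<And>j. 0 < j \<Longrightarrow> j < K \<Longrightarrow> adj G (a 0) (b j)"
  shows False
proof -
  have "a 0 \<noteq> x (Suc i)" if "i < n" for i
    using xa[of 0 0] xx[of 0 "Suc i"] that \<open>n < K\<close> by auto
  moreover have "a 0 \<in> verts G"
    using adj_imp_verts(2)[OF wf xa[of 0 0, THEN iffD2]] \<open>n < K\<close> by simp
  ultimately have "induced_sub (K1nstar n) G"
    using \<open>n < K\<close> ab xa xb bb xx adj_commute
    by (intro induced_sub_K1nstarI[OF wf, where z = "a 0" and l = "\<lambda>i. b (Suc i)" and p = "\<lambda>i. x (Suc i)"])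
      auto
  then show False
    using not_K1nstar by contradiction
qed

lemma matched_cherries_impossible:
  assumes "n < K"
    and xx: "\<And>i j. i < K \<Longrightarrow> j < K \<Longrightarrow> \<not> adj G (x i) (x j)"
    and cherry: "\<And>i. i < K \<Longrightarrow> cherry G (x i) (a i) (b i)"
    and xa: "\<And>i j. i < K \<Longrightarrow> j < K \<Longrightarrow> adj G (x i) (a j) \<longleftrightarrow> i = j"
    and xb: "\<And>i j. i < K \<Longrightarrow> j < K \<Longrightarrow> adj G (x i) (b j) \<longleftrightarrow> i = j"
    and g1: "\<And>i j. i < j \<Longrightarrow> j < K \<Longrightarrow> adj G (a i) (a j) = g1"
    and g2: "\<And>i j. i < j \<Longrightarrow> j < K \<Longrightarrow> adj G (b i) (b j) = g2"
    and g3: "\<And>i j. i < j \<Longrightarrow> j < K \<Longrightarrow> adj G (a i) (b j) = g3"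
    and g4: "\<And>i j. i < j \<Longrightarrow> j < K \<Longrightarrow> adj G (b i) (a j) = g4"
  shows False
proof -
  have aa: "adj G (a i) (a j) = g1" and bb: "adj G (b i) (b j) = g2"
    if "i < K" "j < K" "i \<noteq> j" for i j
    using homogeneous_adj_sym[where y = a and p = g1, OF g1 that]
      homogeneous_adj_sym[where y = b and p = g2, OF g2 that] by simp_all
  have "\<not> g1"
  proof
    assume g1
    have "induced_sub (Kstar n) G"
      using \<open>n < K\<close> aa \<open>g1\<close> xa adj_commute xx
      by (intro induced_sub_KstarI[OF wf, where c = a and p = x]) auto
    then show False
      using not_Kstar by contradiction
  qed
  have "\<not> g2"
  proof
    assume g2
    have "induced_sub (Kstar n) G"
      using \<open>n < K\<close> bb \<open>g2\<close> xb adj_commute xx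
      by (intro induced_sub_KstarI[OF wf, where c = b and p = x]) auto
    then show False
      using not_Kstar by contradiction
  qed
  have aa': "\<not> adj G (a i) (a j)" and bb': "\<not> adj G (b i) (b j)" if "i < K" "j < K" for i j
    using aa[OF that] bb[OF that] \<open>\<not> g1\<close> \<open>\<not> g2\<close> adj_irrefl[OF wf] by (cases "i = j"; simp)+
  have "\<not> g3"
    using cross_star_impossible[OF \<open>n < K\<close> xx xa xb bb'] g3[of 0] by blast
  have "\<not> g4"
    using cross_star_impossible[OF \<open>n < K\<close> xx xb xa aa'] g4[of 0] by blast
  have "\<not> adj G (a i) (b j)" if "i < K" "j < K" for i j
    using cherry[of i] g3[of i j] g4[of j i] \<open>\<not> g3\<close> \<open>\<not> g4\<close> that adj_commute[of G "a i" "b j"]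
    unfolding cherry_def by (cases i j rule: linorder_cases) auto
  then have "induced_sub (nP3 n) G"
    using \<open>n < K\<close> xa xb xx aa' bb' cherry unfolding cherry_def
    by (intro induced_sub_nP3I[OF wf, where x = x and a = a and b = b]) auto
  then show False
    using not_nP3 by contradiction
qed

text \<open>Edges from the ends to all later or to all earlier \<open>x\<^sub>j\<close> give two \<open>x\<^sub>j\<close> with K - 1 common
  neighbours; without them, the edges among the ends decide between \<open>K\<^sub>n\<^sup>*\<close>, \<open>K\<^sub>1\<^sub>,\<^sub>n\<^sup>*\<close>
  and \<open>nP\<^sub>3\<close>.\<close>

lemma distinct_cherry_ends_impossible:
  assumes K: "R + n + 3 \<le> K"
    and xx: "\<And>i j. i < K \<Longrightarrow> j < K \<Longrightarrow> \<not> adj G (x i) (x j)" "inj_on x {..<K}"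
    and cherry: "\<And>i. i < K \<Longrightarrow> cherry G (x i) (a i) (b i)"
    and "inj_on a {..<K}" "inj_on b {..<K}"
    and f1: "\<And>i j. i < j \<Longrightarrow> j < K \<Longrightarrow> adj G (a i) (x j) = f1"
    and f2: "\<And>i j. i < j \<Longrightarrow> j < K \<Longrightarrow> adj G (a j) (x i) = f2"
    and f3: "\<And>i j. i < j \<Longrightarrow> j < K \<Longrightarrow> adj G (b i) (x j) = f3"
    and f4: "\<And>i j. i < j \<Longrightarrow> j < K \<Longrightarrow> adj G (b j) (x i) = f4"
    and g1: "\<And>i j. i < j \<Longrightarrow> j < K \<Longrightarrow> adj G (a i) (a j) = g1"
    and g2: "\<And>i j. i < j \<Longrightarrow> j < K \<Longrightarrow> adj G (b i) (b j) = g2"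
    and g3: "\<And>i j. i < j \<Longrightarrow> j < K \<Longrightarrow> adj G (a i) (b j) = g3"
    and g4: "\<And>i j. i < j \<Longrightarrow> j < K \<Longrightarrow> adj G (b i) (a j) = g4"
  shows False
proof -
  have xa: "adj G (x i) (a i)" and xb: "adj G (x i) (b i)" if "i < K" for i
    using cherry[OF that] unfolding cherry_def by simp_all
  consider "f1 \<or> f2" | "f3 \<or> f4" | "\<not> f1" "\<not> f2" "\<not> f3" "\<not> f4"
    by blast
  then show False
  proof cases
    case 1
    show False
      by (rule ordered_cross_edges_impossible[OF _ xx xa \<open>inj_on a {..<K}\<close> f1 f2 1]) (use K in simp)
  next
    case 2
    show False
      by (rule ordered_cross_edges_impossible[OF _ xx xb \<open>inj_on b {..<K}\<close> f3 f4 2]) (use K in simp)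
  next
    case 3
    have "\<not> adj G (a i) (x j)" "\<not> adj G (a j) (x i)" "\<not> adj G (b i) (x j)" "\<not> adj G (b j) (x i)"
      if "i < j" "j < K" for i j
      using f1[OF that] f2[OF that] f3[OF that] f4[OF that] 3 by simp_all
    then have xa_iff: "adj G (x i) (a j) \<longleftrightarrow> i = j" and xb_iff: "adj G (x i) (b j) \<longleftrightarrow> i = j"
      if "i < K" "j < K" for i j
      using homogeneous_matching[where x = x and y = a, OF xa _ _ that]
        homogeneous_matching[where x = x and y = b, OF xb _ _ that] by simp_all
    have "n < K"
      using K by simp
    then show False
      by (rule matched_cherries_impossible[OF _ xx(1) cherry xa_iff xb_iff g1 g2 g3 g4])
  qed
qed

text \<open>Homogeneity makes each of the maps a and b either constant or injective.\<close>

lemma independent_sequence_impossible: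
  assumes K: "R + n + 3 \<le> K"
    and xx: "\<And>i j. i < K \<Longrightarrow> j < K \<Longrightarrow> \<not> adj G (x i) (x j)" "inj_on x {..<K}"
    and cherry: "\<And>i. i < K \<Longrightarrow> cherry G (x i) (a i) (b i)"
    and e1: "\<And>i j. i < j \<Longrightarrow> j < K \<Longrightarrow> (a i = a j) = e1"
    and e2: "\<And>i j. i < j \<Longrightarrow> j < K \<Longrightarrow> (b i = b j) = e2"
    and f1: "\<And>i j. i < j \<Longrightarrow> j < K \<Longrightarrow> adj G (a i) (x j) = f1"
    and f2: "\<And>i j. i < j \<Longrightarrow> j < K \<Longrightarrow> adj G (a j) (x i) = f2"
    and f3: "\<And>i j. i < j \<Longrightarrow> j < K \<Longrightarrow> adj G (b i) (x j) = f3"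
    and f4: "\<And>i j. i < j \<Longrightarrow> j < K \<Longrightarrow> adj G (b j) (x i) = f4"
    and g1: "\<And>i j. i < j \<Longrightarrow> j < K \<Longrightarrow> adj G (a i) (a j) = g1"
    and g2: "\<And>i j. i < j \<Longrightarrow> j < K \<Longrightarrow> adj G (b i) (b j) = g2"
    and g3: "\<And>i j. i < j \<Longrightarrow> j < K \<Longrightarrow> adj G (a i) (b j) = g3"
    and g4: "\<And>i j. i < j \<Longrightarrow> j < K \<Longrightarrow> adj G (b i) (a j) = g4"
  shows False
proof -
  have xa: "adj G (x i) (a i)" and xb: "adj G (x i) (b i)" and ab: "\<not> adj G (a i) (b i)" "a i \<noteq> b i"
    if "i < K" for i
    using cherry[OF that] unfolding cherry_def by simp_all
  consider "e1" "e2" | "e1" "\<not> e2" | "\<not> e1" "e2" | "\<not> e1" "\<not> e2"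
    by blast
  then show False
  proof cases
    case 1
    have "adj G (a 0) (x i) \<and> adj G (b 0) (x i)" if "i \<in> {..<K}" for i
    proof -
      have "i < K"
        using that by simp
      then show ?thesis
        using homogeneous_eq_const[where a = a, OF e1 \<open>e1\<close> \<open>i < K\<close>]
          homogeneous_eq_const[where a = b, OF e2 \<open>e2\<close> \<open>i < K\<close>] xa[OF \<open>i < K\<close>] xb[OF \<open>i < K\<close>]
          adj_commute[of G "x i" "a i"] adj_commute[of G "x i" "b i"] by auto
    qed
    then have "card {..<K} < R"
      using ab[of 0] xx(2) K by (intro card_common_nbr_family_less[of "a 0" "b 0" x]) auto
    then show False
      using K by simp
  next
    case 2
    have "adj G (a 0) (x i)" "\<not> adj G (a 0) (b i)" "a 0 \<noteq> b i" if "i < K" for i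
      using homogeneous_eq_const[where a = a, OF e1 \<open>e1\<close> that] xa[OF that] ab[OF that]
        adj_commute[of G "x i" "a i"] by auto
    then show False
      using K xx xb f3 f4 g2
      by (intro hub_star_impossible[where z = "a 0" and x = x and y = b and p = f3 and q = f4 and r = g2])
        auto
  next
    case 3
    have "adj G (b 0) (x i)" "\<not> adj G (b 0) (a i)" "b 0 \<noteq> a i" if "i < K" for i
      using homogeneous_eq_const[where a = b, OF e2 \<open>e2\<close> that] xb[OF that] ab[OF that]
        adj_commute[of G "x i" "b i"] adj_commute[of G "a i" "b i"] by auto
    then show False
      using K xx xa f1 f2 g1
      by (intro hub_star_impossible[where z = "b 0" and x = x and y = a and p = f1 and q = f2 and r = g1])
        auto
  next
    case 4
    then have inj: "inj_on a {..<K}" "inj_on b {..<K}"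
      using homogeneous_neq_inj[where a = a, OF e1] homogeneous_neq_inj[where a = b, OF e2] by simp_all
    show False
      by (rule distinct_cherry_ends_impossible[OF K xx cherry inj f1 f2 f3 f4 g1 g2 g3 g4])
  qed
qed

end

section \<open>Bounding the nonsimplicial vertices\<close>

lemma common_nbrs_clique_or_indep:
  assumes wf: "wf_graph G" and "u \<in> verts G" "w \<in> verts G" and uw: "u \<noteq> w" "\<not> adj G u w"
    and S: "S \<subseteq> nbhd G u \<inter> nbhd G w" "finite S" "card S = n"
  shows "clique S (edges G) \<Longrightarrow> induced_sub (E2K n) G"
    and "indep S (edges G) \<Longrightarrow> induced_sub (K2n n) G"
proof -
  obtain s where "bij_betw s {..<n} S"
    using ex_bij_betw_nat_finite[of S] S(2,3) by (auto simp: atLeast0LessThan)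
  then have s_inj: "inj_on s {..<n}" and s_in: "\<And>i. i < n \<Longrightarrow> s i \<in> S"
    unfolding bij_betw_def by auto
  have common: "adj G u (s i)" "adj G w (s i)" if "i < n" for i
    using S(1) s_in[OF that] mem_nbhd_iff[OF wf] by auto
  show "induced_sub (E2K n) G" if "clique S (edges G)"
  proof -
    have ss: "adj G (s i) (s j)" if "i < n" "j < n" "i \<noteq> j" for i j
      using \<open>clique S (edges G)\<close> s_in that inj_onD[OF s_inj, of i j] unfolding clique_def adj_def by auto
    show ?thesis
      by (rule induced_sub_E2KI[OF wf \<open>u \<in> verts G\<close> \<open>w \<in> verts G\<close> uw common ss])
  qed
  show "induced_sub (K2n n) G" if "indep S (edges G)"
  proof -
    have ss: "\<not> adj G (s i) (s j)" if "i < n" "j < n" for i j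
      using \<open>indep S (edges G)\<close> s_in that inj_onD[OF s_inj, of i j] adj_irrefl[OF wf]
      unfolding indep_def adj_def by (cases "i = j") auto
    show ?thesis
      by (rule induced_sub_K2nI[OF wf \<open>u \<in> verts G\<close> \<open>w \<in> verts G\<close> uw common ss s_inj])
  qed
qed

lemma unobstructed_bound_exists:
  obtains R where "\<And>G. wf_graph G \<Longrightarrow> H_free (obstructions n) G \<Longrightarrow> unobstructed G n R"
proof -
  obtain r :: nat where r: "1 \<le> r" "\<forall>(V :: nat set) E. finite V \<and> r \<le> card V \<longrightarrow>
      (\<exists>S\<subseteq>V. card S = n \<and> clique S E \<or> card S = n \<and> indep S E)"
    using ramsey2[of n n] by blast
  have "unobstructed G n r" if G: "wf_graph G" "H_free (obstructions n) G" for G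
  proof
    show "wf_graph G" "H_free (obstructions n) G"
      using G by simp_all
    fix u w assume uw: "u \<noteq> w" "\<not> adj G u w"
    let ?C = "nbhd G u \<inter> nbhd G w"
    show "card ?C < r"
    proof (rule ccontr)
      assume "\<not> card ?C < r"
      moreover have "finite ?C"
        using G(1) by (auto simp: wf_graph_def nbhd_def)
      ultimately obtain S where S: "S \<subseteq> ?C" "card S = n" "clique S (edges G) \<or> indep S (edges G)"
        using r(2) by (meson not_less)
      have "finite S"
        using S(1) \<open>finite ?C\<close> finite_subset by blast
      have "?C \<noteq> {}"
        using \<open>\<not> card ?C < r\<close> r(1) by auto
      then obtain c where "c \<in> ?C"
        by blast
      then have "u \<in> verts G" "w \<in> verts G"
        using adj_imp_verts(1)[OF G(1)] mem_nbhd_iff[OF G(1)] by auto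
      then have "induced_sub (E2K n) G \<or> induced_sub (K2n n) G"
        using common_nbrs_clique_or_indep[OF G(1) _ _ uw S(1) \<open>finite S\<close> S(2)] S(3) by blast
      then show False
        using G(2) unfolding H_free_def obstructions_def by blast
    qed
  qed
  then show thesis
    using that by blast
qed

lemma nonsimplicial_clique_bounded:
  obtains N where "\<And>G Q. unobstructed G n R \<Longrightarrow> finite Q \<Longrightarrow> (\<And>v. v \<in> Q \<Longrightarrow> \<exists>a b. cherry G v a b) \<Longrightarrow>
    (\<And>u w. u \<in> Q \<Longrightarrow> w \<in> Q \<Longrightarrow> u \<noteq> w \<Longrightarrow> adj G u w) \<Longrightarrow> card Q < N"
proof -
  define K where "K = R + n + 3"
  obtain N where N: "\<And>Q (col :: nat \<Rightarrow> nat \<Rightarrow> bool \<times> bool \<times> bool). finite Q \<Longrightarrow> N \<le> card Q \<Longrightarrow>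
      \<exists>x c. (\<forall>i<K. x i \<in> Q) \<and> strict_mono_on {..<K} x \<and> (\<forall>i j. i < j \<longrightarrow> j < K \<longrightarrow> col (x i) (x j) = c)"
    using ordered_ramsey[of K] by blast
  show thesis
  proof (rule that[of "N + R + 2"])
    fix G Q
    assume "unobstructed G n R" and Q: "finite Q" "\<And>v. v \<in> Q \<Longrightarrow> \<exists>a b. cherry G v a b"
      "\<And>u w. u \<in> Q \<Longrightarrow> w \<in> Q \<Longrightarrow> u \<noteq> w \<Longrightarrow> adj G u w"
    interpret unobstructed G n R by fact
    show "card Q < N + R + 2"
    proof (rule ccontr)
      assume "\<not> card Q < N + R + 2"
      then have "R + 2 \<le> card Q" "N \<le> card Q"
        by simp_all
      have "\<forall>v\<in>Q. \<exists>y. adj G v y \<and> (\<exists>z\<in>Q. z \<noteq> y \<and> \<not> adj G z y)"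
      proof
        fix v assume "v \<in> Q"
        then obtain a b where "cherry G v a b"
          using Q(2) by blast
        then show "\<exists>y. adj G v y \<and> (\<exists>z\<in>Q. z \<noteq> y \<and> \<not> adj G z y)"
          by (intro nbr_missing_clique_vertex[where Q = Q]) (use Q(1,3) \<open>R + 2 \<le> card Q\<close> in auto)
      qed
      from bchoice[OF this] obtain Y
        where Y: "\<forall>v\<in>Q. adj G v (Y v) \<and> (\<exists>z\<in>Q. z \<noteq> Y v \<and> \<not> adj G z (Y v))"
        by blast
      obtain x c where x: "\<And>i. i < K \<Longrightarrow> x i \<in> Q" "strict_mono_on {..<K} x"
        and hom: "\<And>i j. i < j \<Longrightarrow> j < K \<Longrightarrow>
          (adj G (Y (x i)) (x j), adj G (Y (x j)) (x i), adj G (Y (x i)) (Y (x j))) = c"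
        using N[of Q "\<lambda>u v. (adj G (Y u) v, adj G (Y v) u, adj G (Y u) (Y v))", OF Q(1) \<open>N \<le> card Q\<close>]
        by blast
      obtain p q s where c: "c = (p, q, s)"
        by (rule prod_cases3)
      have "adj G (Y (x i)) (x j) = p" "adj G (Y (x j)) (x i) = q" "adj G (Y (x i)) (Y (x j)) = s"
        if "i < j" "j < K" for i j
        using hom[OF that] unfolding c by simp_all
      moreover have "inj_on x {..<K}"
        using x(2) by (rule strict_mono_on_imp_inj_on)
      moreover have "R \<le> K" "n \<le> K" "3 \<le> K"
        unfolding K_def by simp_all
      moreover have "adj G (x i) (Y (x i))" "\<exists>z\<in>Q. z \<noteq> Y (x i) \<and> \<not> adj G z (Y (x i))" if "i < K" for i
        using Y x(1)[OF that] by simp_all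
      ultimately show False
        by (intro clique_sequence_impossible[where x = x and y = "\<lambda>i. Y (x i)" and Q = Q and K = K
              and p = p and q = q and r = s]) (use Q(3) x(1) in auto)
    qed
  qed
qed

lemma nonsimplicial_independent_bounded:
  obtains N where "\<And>G Q. unobstructed G n R \<Longrightarrow> finite Q \<Longrightarrow> (\<And>v. v \<in> Q \<Longrightarrow> \<exists>a b. cherry G v a b) \<Longrightarrow>
    (\<And>u w. u \<in> Q \<Longrightarrow> w \<in> Q \<Longrightarrow> \<not> adj G u w) \<Longrightarrow> card Q < N"
proof -
  define K where "K = R + n + 3"
  obtain N where N: "\<And>Q (col :: nat \<Rightarrow> nat \<Rightarrow> (bool \<times> bool) \<times> (bool \<times> bool \<times> bool \<times> bool) \<times> (bool \<times> bool \<times> bool \<times> bool)).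
      finite Q \<Longrightarrow> N \<le> card Q \<Longrightarrow>
      \<exists>x c. (\<forall>i<K. x i \<in> Q) \<and> strict_mono_on {..<K} x \<and> (\<forall>i j. i < j \<longrightarrow> j < K \<longrightarrow> col (x i) (x j) = c)"
    using ordered_ramsey[of K] by blast
  show thesis
  proof (rule that[of N])
    fix G Q
    assume "unobstructed G n R" and Q: "finite Q" "\<And>v. v \<in> Q \<Longrightarrow> \<exists>a b. cherry G v a b"
      "\<And>u w. u \<in> Q \<Longrightarrow> w \<in> Q \<Longrightarrow> \<not> adj G u w"
    interpret unobstructed G n R by fact
    show "card Q < N"
    proof (rule ccontr)
      assume "\<not> card Q < N"
      obtain A B where AB: "\<And>v. v \<in> Q \<Longrightarrow> cherry G v (A v) (B v)"
        using cherry_choice[OF Q(2)] by blast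
      define col where "col u v = ((A u = A v, B u = B v),
          (adj G (A u) v, adj G (A v) u, adj G (B u) v, adj G (B v) u),
          (adj G (A u) (A v), adj G (B u) (B v), adj G (A u) (B v), adj G (B u) (A v)))" for u v
      obtain x c where x: "\<And>i. i < K \<Longrightarrow> x i \<in> Q" "strict_mono_on {..<K} x"
        and hom: "\<And>i j. i < j \<Longrightarrow> j < K \<Longrightarrow> col (x i) (x j) = c"
        using N[of Q col, OF Q(1)] \<open>\<not> card Q < N\<close> by (meson not_less)
      obtain E F H where "c = (E, F, H)"
        by (rule prod_cases3)
      moreover obtain e1 e2 where "E = (e1, e2)"
        by (rule prod.exhaust)
      moreover obtain f1 f2 f3 f4 where "F = (f1, f2, f3, f4)"
        by (rule prod_cases4)
      moreover obtain g1 g2 g3 g4 where "H = (g1, g2, g3, g4)"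
        by (rule prod_cases4)
      ultimately have c: "c = ((e1, e2), (f1, f2, f3, f4), (g1, g2, g3, g4))"
        by simp
      have "(A (x i) = A (x j)) = e1" "(B (x i) = B (x j)) = e2"
        "adj G (A (x i)) (x j) = f1" "adj G (A (x j)) (x i) = f2"
        "adj G (B (x i)) (x j) = f3" "adj G (B (x j)) (x i) = f4"
        "adj G (A (x i)) (A (x j)) = g1" "adj G (B (x i)) (B (x j)) = g2"
        "adj G (A (x i)) (B (x j)) = g3" "adj G (B (x i)) (A (x j)) = g4"
        if "i < j" "j < K" for i j
        using hom[OF that] unfolding c col_def by simp_all
      note homogeneous = this
      have xx: "\<not> adj G (x i) (x j)" if "i < K" "j < K" for i j
        using Q(3) x(1) that by blast
      have cherries: "cherry G (x i) (A (x i)) (B (x i))" if "i < K" for i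
        using AB x(1) that by simp
      have "R + n + 3 \<le> K"
        unfolding K_def by simp
      from independent_sequence_impossible[OF this xx strict_mono_on_imp_inj_on[OF x(2)] cherries homogeneous]
      show False .
    qed
  qed
qed

lemma nonsimplicial_bounded:
  obtains c where "\<And>G. unobstructed G n R \<Longrightarrow> card (nonsimplicial G) < c"
proof -
  obtain Nc where Nc: "\<And>G Q. unobstructed G n R \<Longrightarrow> finite Q \<Longrightarrow> (\<And>v. v \<in> Q \<Longrightarrow> \<exists>a b. cherry G v a b) \<Longrightarrow>
      (\<And>u w. u \<in> Q \<Longrightarrow> w \<in> Q \<Longrightarrow> u \<noteq> w \<Longrightarrow> adj G u w) \<Longrightarrow> card Q < Nc"
    using nonsimplicial_clique_bounded[where n = n and R = R] by blast
  obtain Ni where Ni: "\<And>G Q. unobstructed G n R \<Longrightarrow> finite Q \<Longrightarrow> (\<And>v. v \<in> Q \<Longrightarrow> \<exists>a b. cherry G v a b) \<Longrightarrow>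
      (\<And>u w. u \<in> Q \<Longrightarrow> w \<in> Q \<Longrightarrow> \<not> adj G u w) \<Longrightarrow> card Q < Ni"
    using nonsimplicial_independent_bounded[where n = n and R = R] by blast
  obtain r :: nat where r: "\<forall>(V :: nat set) E. finite V \<and> r \<le> card V \<longrightarrow>
      (\<exists>S\<subseteq>V. card S = Nc \<and> clique S E \<or> card S = Ni \<and> indep S E)"
    using ramsey2[of Nc Ni] by blast
  show thesis
  proof (rule that[of r])
    fix G assume "unobstructed G n R"
    then interpret unobstructed G n R .
    show "card (nonsimplicial G) < r"
    proof (rule ccontr)
      assume "\<not> card (nonsimplicial G) < r"
      moreover have "finite (nonsimplicial G)"
        using wf by (simp add: nonsimplicial_def wf_graph_def)
      ultimately obtain S where S: "S \<subseteq> nonsimplicial G"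
        "card S = Nc \<and> clique S (edges G) \<or> card S = Ni \<and> indep S (edges G)"
        using r by (meson not_less)
      have "finite S"
        using S(1) \<open>finite (nonsimplicial G)\<close> finite_subset by blast
      have cherries: "\<exists>a b. cherry G v a b" if "v \<in> S" for v
        using S(1) that mem_nonsimplicial_iff[OF wf] by blast
      from S(2) show False
      proof
        assume "card S = Nc \<and> clique S (edges G)"
        moreover have "adj G u w" if "u \<in> S" "w \<in> S" "u \<noteq> w" for u w
          using calculation that unfolding clique_def adj_def by blast
        ultimately show False
          using Nc[OF \<open>unobstructed G n R\<close> \<open>finite S\<close> cherries] by simp
      next
        assume "card S = Ni \<and> indep S (edges G)"
        moreover have "\<not> adj G u w" if "u \<in> S" "w \<in> S" for u w
          using calculation that adj_irrefl[OF wf] unfolding indep_def adj_def by (cases "u = w") auto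
        ultimately show False
          using Ni[OF \<open>unobstructed G n R\<close> \<open>finite S\<close> cherries] by simp
      qed
    qed
  qed
qed

lemma family_le_obstructions_if_bounded:
  assumes "\<And>G. wf_graph G \<Longrightarrow> H_free \<H> G \<Longrightarrow> card (nonsimplicial G) < c"
  shows "family_le \<H> (obstructions (c + 2))"
  unfolding family_le_def
proof
  fix F assume F: "F \<in> obstructions (c + 2)"
  then have "wf_graph F"
    using wf_Kstar wf_nP3 wf_K1nstar wf_K2n wf_E2K wf_CK by (auto simp: obstructions_def)
  moreover have "\<not> card (nonsimplicial F) < c"
    using n_le_card_nonsimplicial_obstruction[OF F] by simp
  ultimately have "\<not> H_free \<H> F"
    using assms by blast
  then show "\<exists>H\<in>\<H>. induced_sub H F"
    unfolding H_free_def by blast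
qed

theorem corollary1p9:
  fixes \<H> :: "graph set"
  assumes "\<forall>H\<in>\<H>. wf_graph H"
  shows "(\<exists>c::nat. \<forall>G. wf_graph G \<and> H_free \<H> G \<longrightarrow>
            card {v \<in> verts G. alpha (induced G (nbhd G v)) \<ge> 2} < c)
     \<longleftrightarrow> (\<exists>n::nat. n > 0 \<and>
            family_le \<H> {Kstar n, nP3 n, K1nstar n, K2n n, E2K n, CK n})"
proof
  assume "\<exists>c::nat. \<forall>G. wf_graph G \<and> H_free \<H> G \<longrightarrow>
            card {v \<in> verts G. alpha (induced G (nbhd G v)) \<ge> 2} < c"
  then obtain c where "\<And>G. wf_graph G \<Longrightarrow> H_free \<H> G \<Longrightarrow> card (nonsimplicial G) < c"
    unfolding nonsimplicial_def by blast
  then have "family_le \<H> (obstructions (c + 2))"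
    by (rule family_le_obstructions_if_bounded)
  then show "\<exists>n::nat. n > 0 \<and> family_le \<H> {Kstar n, nP3 n, K1nstar n, K2n n, E2K n, CK n}"
    unfolding obstructions_def by (intro exI[of _ "c + 2"]) simp
next
  assume "\<exists>n::nat. n > 0 \<and> family_le \<H> {Kstar n, nP3 n, K1nstar n, K2n n, E2K n, CK n}"
  then obtain n where n: "family_le \<H> (obstructions n)"
    unfolding obstructions_def by blast
  obtain R where R: "\<And>G. wf_graph G \<Longrightarrow> H_free (obstructions n) G \<Longrightarrow> unobstructed G n R"
    using unobstructed_bound_exists[where n = n] by blast
  obtain c where c: "\<And>G. unobstructed G n R \<Longrightarrow> card (nonsimplicial G) < c"
    using nonsimplicial_bounded[where n = n and R = R] by blast
  have "card (nonsimplicial G) < c" if "wf_graph G" "H_free \<H> G" for G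
    using c[OF R[OF that(1) H_free_family_le[OF n that(2)]]] .
  then show "\<exists>c::nat. \<forall>G. wf_graph G \<and> H_free \<H> G \<longrightarrow>
      card {v \<in> verts G. alpha (induced G (nbhd G v)) \<ge> 2} < c"
    unfolding nonsimplicial_def by blast
qed

end
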